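(* For all partial Boolean functions $f:D\to\{0,1\}$ with $D\subseteq\{0,1\}^n$, we have $\mathrm{QS}(f)\le \mathrm{Q}(f)$.
   Context: Query model: for $x\in\{0,1\}^n$ the oracle $O_x$ acts by $O_x|i,b\rangle=|i,b\oplus x_i\rangle$. A $T$-query quantum algorithm applies input-independent unitaries $U_0,\dots,U_T$ interleaved with $O_x$ to $|0^m\rangle$, producing $|\psi_x\rangle=U_TO_x\cdots O_xU_0|0^m\rangle$. It then either measures the first qubit to produce an output bit, or outputs the mixed state obtained by tracing out a fixed subset of qubits. The trace distance is $\|\rho-\sigma\|_{tr}=\tfrac12\|\rho-\sigma\|_1$. $\mathrm{Q}(f)$ is the minimum $T$ such that some $T$-query algorithm outputs $f(x)$ with probability at least $2/3$ for every $x\in D$. $\mathrm{QS}(f)$ is the smallest $k$ such that some $k$-query algorithm outputs states $\rho_x$ ($x\in D$) with $\|\rho_x-\rho_y\|_{tr}\ge 1/6$ whenever $x,y\in D$ and $f(x)\ne f(y)$. *)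

theory Defs
  imports "Jordan_Normal_Form.Schur_Decomposition" "HOL-Library.Extended_Nat"
begin

text \<open>Computational basis states of
  m qubits are indexed by k < 2^m; qubit q of basis state k is bit q of k.
  The query register consists of qubits 0..r-1 (holding the index i = k mod 2^r, with
  2^r \<ge> n) and qubit r (holding b).  "First qubit" = qubit 0.\<close>

definition qbit :: "nat \<Rightarrow> nat \<Rightarrow> bool" where
  "qbit k q = odd (k div 2 ^ q)"

definition flip_bit :: "nat \<Rightarrow> nat \<Rightarrow> nat" where
  "flip_bit k q = (if qbit k q then k - 2 ^ q else k + 2 ^ q)"

definition unitary_mat :: "nat \<Rightarrow> complex mat \<Rightarrow> bool" where
  "unitary_mat N U \<longleftrightarrow> U \<in> carrier_mat N N \<and> mat_adjoint U * U = 1\<^sub>m N"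

text \<open>Query operator O_x |i,b,w> = |i, b xor x_i, w>; acts as identity on indices i \<ge> n.\<close>
definition query_oracle :: "nat \<Rightarrow> nat \<Rightarrow> bool list \<Rightarrow> complex mat" where
  "query_oracle m r x = mat (2 ^ m) (2 ^ m) (\<lambda>(j, k).
     (let i = k mod 2 ^ r in
      if j = (if i < length x \<and> x ! i then flip_bit k r else k) then 1 else 0))"

definition query_alg :: "nat \<Rightarrow> nat \<Rightarrow> nat \<Rightarrow> nat \<Rightarrow> (nat \<Rightarrow> complex mat) \<Rightarrow> bool" where
  "query_alg n m r T U \<longleftrightarrow> n \<le> 2 ^ r \<and> r < m \<and> (\<forall>t\<le>T. unitary_mat (2 ^ m) (U t))"

fun run :: "nat \<Rightarrow> nat \<Rightarrow> (nat \<Rightarrow> complex mat) \<Rightarrow> bool list \<Rightarrow> nat \<Rightarrow> complex vec" where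
  "run m r U x 0 = U 0 *\<^sub>v unit_vec (2 ^ m) 0"
| "run m r U x (Suc t) = U (Suc t) *\<^sub>v (query_oracle m r x *\<^sub>v run m r U x t)"

definition prob_out :: "complex vec \<Rightarrow> bool \<Rightarrow> real" where
  "prob_out psi b = (\<Sum>k\<in>{k. k < dim_vec psi \<and> qbit k 0 = b}. (cmod (psi $ k))\<^sup>2)"

text \<open>Partial trace of |psi><psi| over the set S of qubits.  Kept qubits
  K = {0..<m} - S, in increasing order, index the reduced state.\<close>
definition embed :: "nat \<Rightarrow> nat set \<Rightarrow> nat \<Rightarrow> nat \<Rightarrow> nat" where
  "embed m S a c = (let ks = sorted_list_of_set ({0..<m} - S); ts = sorted_list_of_set S in
     (\<Sum>j<length ks. if qbit a j then 2 ^ (ks ! j) else 0)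
   + (\<Sum>j<length ts. if qbit c j then 2 ^ (ts ! j) else 0))"

definition reduced_state :: "nat \<Rightarrow> nat set \<Rightarrow> complex vec \<Rightarrow> complex mat" where
  "reduced_state m S psi = mat (2 ^ (m - card S)) (2 ^ (m - card S)) (\<lambda>(a, b).
     \<Sum>c<2 ^ card S. psi $ embed m S a c * cnj (psi $ embed m S b c))"

text \<open>Schatten 1-norm: sum of singular values (square roots of the eigenvalues of A^* A,
  counted with multiplicity).  Trace distance = half of it.\<close>
definition trace_norm :: "complex mat \<Rightarrow> real" where
  "trace_norm A = sum_mset (image_mset (\<lambda>l. sqrt (Re l)) (proots (char_poly (mat_adjoint A * A))))"

definition trace_dist :: "complex mat \<Rightarrow> complex mat \<Rightarrow> real" where
  "trace_dist \<rho> \<sigma> = trace_norm (\<rho> - \<sigma>) / 2"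

definition computes :: "nat \<Rightarrow> bool list set \<Rightarrow> (bool list \<Rightarrow> bool) \<Rightarrow> nat \<Rightarrow> bool" where
  "computes n D f T \<longleftrightarrow> (\<exists>m r U. query_alg n m r T U \<and>
      (\<forall>x\<in>D. prob_out (run m r U x T) (f x) \<ge> 2/3))"

definition separates :: "nat \<Rightarrow> bool list set \<Rightarrow> (bool list \<Rightarrow> bool) \<Rightarrow> nat \<Rightarrow> bool" where
  "separates n D f k \<longleftrightarrow> (\<exists>m r U S. query_alg n m r k U \<and> S \<subseteq> {0..<m} \<and>
      (\<forall>x\<in>D. \<forall>y\<in>D. f x \<noteq> f y \<longrightarrow>
         trace_dist (reduced_state m S (run m r U x k)) (reduced_state m S (run m r U y k)) \<ge> 1/6))"

text \<open>Complexities as extended naturals (infimum of the empty set is \<infinity>).\<close>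
definition Q :: "nat \<Rightarrow> bool list set \<Rightarrow> (bool list \<Rightarrow> bool) \<Rightarrow> enat" where
  "Q n D f = (INF T\<in>{T. computes n D f T}. enat T)"

definition QS :: "nat \<Rightarrow> bool list set \<Rightarrow> (bool list \<Rightarrow> bool) \<Rightarrow> enat" where
  "QS n D f = (INF k\<in>{k. separates n D f k}. enat k)"

end

theory Submission
  imports Defs
begin

(*
  The algorithm witnessing Q(f) also witnesses QS(f) once every qubit except the output
  qubit 0 is traced out.  The one-qubit state
  left over carries the output distribution on its diagonal, so for two inputs the
  difference of these states is a traceless Hermitian 2x2 matrix with diagonal (d, -d),
  d being the difference of the probabilities of outcome 0.  Its Gram matrix is the scalar
  d^2 + |e|^2 (e the off-diagonal entry), whence its trace norm is 2 sqrt (d^2 + |e|^2)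
  \<ge> 2|d|.  If f(x) \<noteq> f(y), correctness with probability 2/3 on both inputs forces
  |d| \<ge> 1/3, so the trace distance is at least 1/3.
*)

lemma qbit_iff_bit: "qbit k q = bit k q"
  unfolding qbit_def by (simp add: bit_iff_odd)

lemma flip_bit_eq_Bit_flip_bit: "flip_bit k q = Bit_Operations.flip_bit q k"
proof -
  have "bit k q \<Longrightarrow> 2 ^ q \<le> k"
    by (metis bit_iff_odd div_less even_zero not_le)
  then have "int (flip_bit k q) = Bit_Operations.flip_bit q (int k)"
    unfolding flip_bit_def qbit_iff_bit flip_bit_eq_if set_bit_eq unset_bit_eq
    by (auto simp: bit_of_nat_iff_bit of_nat_diff)
  then show ?thesis by (simp flip: of_nat_flip_bit_eq)
qed

lemma flip_bit_flip_bit: "flip_bit (flip_bit k q) q = k"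
  unfolding flip_bit_eq_Bit_flip_bit by (rule bit_eqI) (auto simp: bit_flip_bit_iff)

lemma flip_bit_mod: "flip_bit k q mod 2 ^ q = k mod 2 ^ q"
  unfolding flip_bit_eq_Bit_flip_bit by (metis take_bit_eq_mod take_bit_flip_bit_eq order_refl)

lemma flip_bit_less: "k < 2 ^ m \<Longrightarrow> q < m \<Longrightarrow> flip_bit k q < 2 ^ m"
  unfolding flip_bit_eq_Bit_flip_bit
  by (metis take_bit_flip_bit_eq take_bit_nat_eq_self_iff not_le)

lemma sum_bits_eq:
  fixes c k :: nat
  assumes "c < 2 ^ k"
  shows "(\<Sum>j<k. if qbit c j then 2 ^ j else 0) = c"
proof -
  have "c = take_bit k c" using assms by (simp add: take_bit_nat_eq_self)
  also have "\<dots> = (\<Sum>j<k. if qbit c j then 2 ^ j else 0)"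
    unfolding take_bit_sum atLeast0LessThan qbit_def bit_iff_odd
    by (intro sum.cong) (auto simp: push_bit_eq_mult)
  finally show ?thesis ..
qed

definition oracle_target :: "nat \<Rightarrow> bool list \<Rightarrow> nat \<Rightarrow> nat" where
  "oracle_target r x k =
     (let i = k mod 2 ^ r in if i < length x \<and> x ! i then flip_bit k r else k)"

lemma oracle_target_oracle_target: "oracle_target r x (oracle_target r x k) = k"
  unfolding oracle_target_def Let_def by (auto simp: flip_bit_mod flip_bit_flip_bit)

lemma oracle_target_less: "k < 2 ^ m \<Longrightarrow> r < m \<Longrightarrow> oracle_target r x k < 2 ^ m"
  unfolding oracle_target_def Let_def by (simp add: flip_bit_less)

lemma query_oracle_carrier_mat: "query_oracle m r x \<in> carrier_mat (2 ^ m) (2 ^ m)"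
  unfolding query_oracle_def by simp

lemma query_oracle_mult_vec_index:
  assumes v: "v \<in> carrier_vec (2 ^ m)" and r: "r < m" and j: "j < 2 ^ m"
  shows "(query_oracle m r x *\<^sub>v v) $ j = v $ oracle_target r x j"
proof -
  have "(query_oracle m r x *\<^sub>v v) $ j
      = (\<Sum>k<2 ^ m. (if j = oracle_target r x k then 1 else 0) * v $ k)"
    using v j unfolding query_oracle_def
    by (simp add: scalar_prod_def atLeast0LessThan oracle_target_def Let_def)
  also have "\<dots> = (\<Sum>k<2 ^ m. if k = oracle_target r x j then v $ k else 0)"
    by (intro sum.cong refl) (metis oracle_target_oracle_target mult_1 mult_zero_left)
  also have "\<dots> = v $ oracle_target r x j" using oracle_target_less[OF j r] by simp
  finally show ?thesis .
qed

lemma mat_adjoint_carrier_mat: "A \<in> carrier_mat n n \<Longrightarrow> mat_adjoint A \<in> carrier_mat n n"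
  unfolding mat_adjoint_def by auto

lemma mat_adjoint_mult_index:
  assumes "A \<in> carrier_mat n n" "B \<in> carrier_mat n n" "i < n" "j < n"
  shows "(mat_adjoint A * B) $$ (i, j) = (\<Sum>k<n. cnj (A $$ (k, i)) * B $$ (k, j))"
  using assms unfolding mat_adjoint_def
  by (auto simp: scalar_prod_def atLeast0LessThan intro!: sum.cong)

definition sq_norm_vec :: "complex vec \<Rightarrow> real" where
  "sq_norm_vec v = (\<Sum>k<dim_vec v. (cmod (v $ k))\<^sup>2)"

lemma of_real_sq_norm_vec:
  "complex_of_real (sq_norm_vec v) = (\<Sum>k<dim_vec v. v $ k * cnj (v $ k))"
  unfolding sq_norm_vec_def of_real_sum by (intro sum.cong refl complex_norm_square)

lemma sq_norm_vec_unitary_mult: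
  assumes U: "unitary_mat n U" and v: "v \<in> carrier_vec n"
  shows "sq_norm_vec (U *\<^sub>v v) = sq_norm_vec v"
proof -
  have UC: "U \<in> carrier_mat n n" and UU: "mat_adjoint U * U = 1\<^sub>m n"
    using U unfolding unitary_mat_def by auto
  have orth: "(\<Sum>j<n. cnj (U $$ (j, l)) * U $$ (j, k)) = (if l = k then 1 else 0)"
    if "l < n" "k < n" for l k
    using mat_adjoint_mult_index[OF UC UC that] UU that by simp
  have "complex_of_real (sq_norm_vec (U *\<^sub>v v))
      = (\<Sum>j<n. (\<Sum>k<n. U $$ (j, k) * v $ k) * cnj (\<Sum>l<n. U $$ (j, l) * v $ l))"
    unfolding of_real_sq_norm_vec using UC v
    by (intro sum.cong) (auto simp: scalar_prod_def atLeast0LessThan)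
  also have "\<dots> = (\<Sum>j<n. \<Sum>k<n. \<Sum>l<n. v $ k * cnj (v $ l) * (cnj (U $$ (j, l)) * U $$ (j, k)))"
    unfolding cnj_sum sum_product by (intro sum.cong refl) (simp add: mult_ac)
  also have "\<dots> = (\<Sum>k<n. \<Sum>l<n. \<Sum>j<n. v $ k * cnj (v $ l) * (cnj (U $$ (j, l)) * U $$ (j, k)))"
    by (subst sum.swap) (intro sum.cong refl sum.swap)
  also have "\<dots> = (\<Sum>k<n. \<Sum>l<n. v $ k * cnj (v $ l) * (\<Sum>j<n. cnj (U $$ (j, l)) * U $$ (j, k)))"
    by (simp add: sum_distrib_left)
  also have "\<dots> = (\<Sum>k<n. v $ k * cnj (v $ k))"
    by (simp add: orth if_distrib cong: if_cong)
  also have "\<dots> = complex_of_real (sq_norm_vec v)" unfolding of_real_sq_norm_vec using v by simp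
  finally show ?thesis by simp
qed

lemma sq_norm_vec_query_oracle:
  assumes v: "v \<in> carrier_vec (2 ^ m)" and r: "r < m"
  shows "sq_norm_vec (query_oracle m r x *\<^sub>v v) = sq_norm_vec v"
proof -
  have "bij_betw (oracle_target r x) {..<2 ^ m} {..<2 ^ m}"
    by (rule bij_betw_byWitness[where f' = "oracle_target r x"])
      (auto simp: oracle_target_oracle_target oracle_target_less r)
  then have "(\<Sum>j<2 ^ m. (cmod (v $ oracle_target r x j))\<^sup>2) = (\<Sum>j<2 ^ m. (cmod (v $ j))\<^sup>2)"
    by (rule sum.reindex_bij_betw)
  moreover have "(\<Sum>j<2 ^ m. (cmod ((query_oracle m r x *\<^sub>v v) $ j))\<^sup>2)
      = (\<Sum>j<2 ^ m. (cmod (v $ oracle_target r x j))\<^sup>2)"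
    by (intro sum.cong refl) (simp add: query_oracle_mult_vec_index[OF v r])
  ultimately show ?thesis
    using v query_oracle_carrier_mat[of m r x] unfolding sq_norm_vec_def by simp
qed

lemma run_carrier_vec:
  assumes "query_alg n m r T U" "t \<le> T"
  shows "run m r U x t \<in> carrier_vec (2 ^ m)"
  using assms(2)
proof (induction t)
  case 0
  then show ?case using assms(1) by (auto simp: query_alg_def unitary_mat_def)
next
  case (Suc t)
  then have "U (Suc t) \<in> carrier_mat (2 ^ m) (2 ^ m)"
    using assms(1) by (simp add: query_alg_def unitary_mat_def)
  then show ?case
    using Suc query_oracle_carrier_mat by (auto intro!: mult_mat_vec_carrier)
qed

lemma sq_norm_vec_run:
  assumes qa: "query_alg n m r T U" and "t \<le> T"
  shows "sq_norm_vec (run m r U x t) = 1"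
  using assms(2)
proof (induction t)
  case 0
  have "sq_norm_vec (unit_vec (2 ^ m) 0) = (\<Sum>k<(2::nat) ^ m. if k = 0 then 1 else 0 :: real)"
    unfolding sq_norm_vec_def by (intro sum.cong) auto
  then have "sq_norm_vec (unit_vec (2 ^ m) 0) = 1" by simp
  moreover have "unitary_mat (2 ^ m) (U 0)" using qa by (simp add: query_alg_def)
  ultimately show ?case by (simp add: sq_norm_vec_unitary_mult)
next
  case (Suc t)
  have r: "r < m" using qa by (simp add: query_alg_def)
  have v: "run m r U x t \<in> carrier_vec (2 ^ m)" using run_carrier_vec qa Suc.prems by simp
  have "query_oracle m r x *\<^sub>v run m r U x t \<in> carrier_vec (2 ^ m)"
    using v query_oracle_carrier_mat by (auto intro!: mult_mat_vec_carrier)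
  moreover have "unitary_mat (2 ^ m) (U (Suc t))" using qa Suc.prems by (simp add: query_alg_def)
  ultimately show ?case
    using Suc sq_norm_vec_query_oracle[OF v r] by (simp add: sq_norm_vec_unitary_mult)
qed

lemma prob_out_False_add_True: "prob_out psi False + prob_out psi True = sq_norm_vec psi"
proof -
  have "{..<dim_vec psi}
      = {k. k < dim_vec psi \<and> qbit k 0 = False} \<union> {k. k < dim_vec psi \<and> qbit k 0 = True}"
    by auto
  then show ?thesis unfolding prob_out_def sq_norm_vec_def
    by (simp add: sum.union_disjoint[symmetric] disjoint_iff)
qed

lemma trace_norm_eq_if_gram_scalar:
  assumes A: "A \<in> carrier_mat n n" and s: "s \<ge> 0"
    and gram: "mat_adjoint A * A = complex_of_real s \<cdot>\<^sub>m 1\<^sub>m n"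
  shows "trace_norm A = n * sqrt s"
proof -
  let ?B = "complex_of_real s \<cdot>\<^sub>m 1\<^sub>m n"
  have "upper_triangular ?B" by (auto simp: upper_triangular_def)
  moreover have "diag_mat ?B = replicate n (complex_of_real s)"
    by (auto simp: diag_mat_def intro: nth_equalityI)
  ultimately have "char_poly ?B = [:- complex_of_real s, 1:] ^ n"
    using char_poly_upper_triangular[of ?B n] by (simp add: prod_list_replicate)
  then have "proots (char_poly ?B) = replicate_mset n (complex_of_real s)"
    by (simp add: proots_power)
  then show ?thesis
    unfolding trace_norm_def gram using s by simp
qed

lemma gram_traceless_hermitian_2:
  fixes d :: real and e :: complex
  assumes A: "A \<in> carrier_mat 2 2" and "A $$ (0,0) = of_real d" "A $$ (1,1) = - of_real d"
    and "A $$ (0,1) = e" "A $$ (1,0) = cnj e"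
  shows "mat_adjoint A * A = complex_of_real (d\<^sup>2 + (cmod e)\<^sup>2) \<cdot>\<^sub>m 1\<^sub>m 2"
proof -
  have sum_2: "(\<Sum>k<2. g k) = g 0 + g 1" for g :: "nat \<Rightarrow> complex"
    by (simp add: numeral_2_eq_2)
  have "(mat_adjoint A * A) $$ (i, j)
      = (if i = j then complex_of_real (d\<^sup>2 + (cmod e)\<^sup>2) else 0)"
    if "i < 2" "j < 2" for i j
    using that assms by (auto simp: mat_adjoint_mult_index[OF A A] sum_2 less_2_cases_iff
      complex_eq_iff power2_eq_square cmod_def)
  then show ?thesis
    using A mat_adjoint_carrier_mat[OF A] by (intro eq_matI) auto
qed

lemma trace_norm_traceless_hermitian_2_ge:
  fixes d :: real
  assumes A: "A \<in> carrier_mat 2 2" and "A $$ (0,0) = of_real d" "A $$ (1,1) = - of_real d"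
    and "A $$ (1,0) = cnj (A $$ (0,1))"
  shows "trace_norm A \<ge> 2 * \<bar>d\<bar>"
proof -
  have "trace_norm A = 2 * sqrt (d\<^sup>2 + (cmod (A $$ (0,1)))\<^sup>2)"
    using trace_norm_eq_if_gram_scalar[OF A _ gram_traceless_hermitian_2[OF A assms(2,3) refl assms(4)]]
    by simp
  moreover have "\<bar>d\<bar> \<le> sqrt (d\<^sup>2 + (cmod (A $$ (0,1)))\<^sup>2)"
    by (metis real_sqrt_abs real_sqrt_le_mono le_add_same_cancel1 zero_le_power2)
  ultimately show ?thesis by simp
qed

lemma embed_first_qubit:
  assumes "m \<ge> 1" and a: "a < 2" and c: "c < 2 ^ (m - 1)"
  shows "embed m {1..<m} a c = a + 2 * c"
proof -
  have "{0..<m} - {1..<m} = {0}" using assms(1) by auto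
  then have kept: "sorted_list_of_set ({0..<m} - {1..<m}) = [0]" by simp
  have "(\<Sum>j<m - 1. if qbit c j then (2::nat) ^ ([1..<m] ! j) else 0)
      = 2 * (\<Sum>j<m - 1. if qbit c j then 2 ^ j else 0)"
    unfolding sum_distrib_left by (intro sum.cong refl) auto
  moreover have "(\<Sum>j<length [0::nat]. if qbit a j then (2::nat) ^ ([0] ! j) else 0) = a"
    using a unfolding qbit_def by (cases a) auto
  ultimately show ?thesis
    unfolding embed_def Let_def kept sorted_list_of_set_range using sum_bits_eq[OF c] by simp
qed

lemma reduced_state_first_qubit_carrier_mat:
  assumes "m \<ge> 1"
  shows "reduced_state m {1..<m} psi \<in> carrier_mat 2 2"
  using assms unfolding reduced_state_def by simp

lemma reduced_state_first_qubit_index: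
  assumes "m \<ge> 1" "a < 2" "b < 2"
  shows "reduced_state m {1..<m} psi $$ (a, b)
      = (\<Sum>c<2 ^ (m - 1). psi $ (a + 2 * c) * cnj (psi $ (b + 2 * c)))"
  using assms embed_first_qubit by (simp add: reduced_state_def)

lemma prob_out_eq_sum_first_qubit:
  assumes m: "m \<ge> 1" and psi: "psi \<in> carrier_vec (2 ^ m)" and a: "a < 2"
  shows "prob_out psi (a = 1) = (\<Sum>c<2 ^ (m - 1). (cmod (psi $ (a + 2 * c)))\<^sup>2)"
proof -
  have pm: "(2::nat) ^ m = 2 * 2 ^ (m - 1)" using m by (cases m) auto
  have "{k. k < dim_vec psi \<and> qbit k 0 = (a = 1)} = (\<lambda>c. a + 2 * c) ` {..<2 ^ (m - 1)}"
  proof (rule Set.set_eqI, rule iffI)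
    fix k assume k: "k \<in> {k. k < dim_vec psi \<and> qbit k 0 = (a = 1)}"
    then have "k mod 2 = a" using a by (auto simp: qbit_def odd_iff_mod_2_eq_one less_2_cases_iff)
    then have "k = a + 2 * (k div 2)" using div_mult_mod_eq[of k 2] by linarith
    moreover have "k div 2 < 2 ^ (m - 1)" using k psi pm by auto
    ultimately show "k \<in> (\<lambda>c. a + 2 * c) ` {..<2 ^ (m - 1)}" by blast
  next
    fix k assume "k \<in> (\<lambda>c. a + 2 * c) ` {..<2 ^ (m - 1)}"
    then show "k \<in> {k. k < dim_vec psi \<and> qbit k 0 = (a = 1)}"
      using a psi pm by (auto simp: qbit_def less_2_cases_iff)
  qed
  moreover have "inj_on (\<lambda>c. a + 2 * c) {..<2 ^ (m - 1)}" by (auto simp: inj_on_def)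
  ultimately show ?thesis unfolding prob_out_def by (simp add: sum.reindex)
qed

lemma reduced_state_first_qubit_diag:
  assumes "m \<ge> 1" "psi \<in> carrier_vec (2 ^ m)" "a < 2"
  shows "reduced_state m {1..<m} psi $$ (a, a) = complex_of_real (prob_out psi (a = 1))"
  unfolding reduced_state_first_qubit_index[OF assms(1,3,3)]
    prob_out_eq_sum_first_qubit[OF assms] of_real_sum
  by (intro sum.cong refl complex_norm_square[symmetric])

lemma reduced_state_first_qubit_hermitian:
  assumes "m \<ge> 1"
  shows "reduced_state m {1..<m} psi $$ (1, 0) = cnj (reduced_state m {1..<m} psi $$ (0, 1))"
  using reduced_state_first_qubit_index[OF assms, of 1 0 psi]
    reduced_state_first_qubit_index[OF assms, of 0 1 psi]
  by (simp add: mult.commute)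

lemma trace_dist_first_qubit_ge:
  assumes m: "m \<ge> 1" and psi: "psi \<in> carrier_vec (2 ^ m)" "sq_norm_vec psi = 1"
    and phi: "phi \<in> carrier_vec (2 ^ m)" "sq_norm_vec phi = 1"
  shows "trace_dist (reduced_state m {1..<m} psi) (reduced_state m {1..<m} phi)
      \<ge> \<bar>prob_out psi False - prob_out phi False\<bar>"
proof -
  define \<rho> where "\<rho> = reduced_state m {1..<m} psi"
  define \<sigma> where "\<sigma> = reduced_state m {1..<m} phi"
  define d where "d = prob_out psi False - prob_out phi False"
  have \<rho>: "\<rho> \<in> carrier_mat 2 2" and \<sigma>: "\<sigma> \<in> carrier_mat 2 2"
    unfolding \<rho>_def \<sigma>_def using reduced_state_first_qubit_carrier_mat[OF m] by auto
  have diag: "\<rho> $$ (a, a) = prob_out psi (a = 1)" "\<sigma> $$ (a, a) = prob_out phi (a = 1)"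
    if "a < 2" for a
    unfolding \<rho>_def \<sigma>_def using reduced_state_first_qubit_diag that m psi phi by auto
  have "trace_norm (\<rho> - \<sigma>) \<ge> 2 * \<bar>d\<bar>"
  proof (rule trace_norm_traceless_hermitian_2_ge)
    show "\<rho> - \<sigma> \<in> carrier_mat 2 2" using minus_carrier_mat[OF \<sigma>] \<rho> by blast
    show "(\<rho> - \<sigma>) $$ (0, 0) = complex_of_real d"
      using \<sigma> diag[of 0] by (simp add: d_def)
    have "prob_out psi True - prob_out phi True = - d"
      using prob_out_False_add_True[of psi] prob_out_False_add_True[of phi] psi(2) phi(2)
      unfolding d_def by linarith
    then show "(\<rho> - \<sigma>) $$ (1, 1) = - complex_of_real d"
      using \<sigma> diag[of 1] by (simp flip: of_real_diff)
    show "(\<rho> - \<sigma>) $$ (1, 0) = cnj ((\<rho> - \<sigma>) $$ (0, 1))"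
      using \<sigma> reduced_state_first_qubit_hermitian[OF m] by (simp add: \<rho>_def \<sigma>_def)
  qed
  then show ?thesis unfolding trace_dist_def d_def \<rho>_def \<sigma>_def by simp
qed

lemma computes_imp_separates:
  assumes "computes n D f T"
  shows "separates n D f T"
proof -
  obtain m r U where qa: "query_alg n m r T U"
    and correct: "\<forall>x\<in>D. prob_out (run m r U x T) (f x) \<ge> 2/3"
    using assms unfolding computes_def by blast
  have m: "m \<ge> 1" using qa unfolding query_alg_def by auto
  have "trace_dist (reduced_state m {1..<m} (run m r U x T))
      (reduced_state m {1..<m} (run m r U y T)) \<ge> 1/6"
    if "x \<in> D" "y \<in> D" "f x \<noteq> f y" for x y
  proof -
    have True_eq: "prob_out (run m r U z T) True = 1 - prob_out (run m r U z T) False" for z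
      using prob_out_False_add_True[of "run m r U z T"] sq_norm_vec_run[OF qa order_refl, of z]
      by linarith
    have px: "prob_out (run m r U x T) (f x) \<ge> 2/3"
      and py: "prob_out (run m r U y T) (f y) \<ge> 2/3"
      using correct that by auto
    have "\<bar>prob_out (run m r U x T) False - prob_out (run m r U y T) False\<bar> \<ge> 1/3"
    proof (cases "f x")
      case True
      with that(3) have "\<not> f y" by simp
      with True px py True_eq[of x] show ?thesis by simp
    next
      case False
      with that(3) have "f y" by simp
      with False px py True_eq[of y] show ?thesis by simp
    qed
    moreover have "trace_dist (reduced_state m {1..<m} (run m r U x T))
        (reduced_state m {1..<m} (run m r U y T))
        \<ge> \<bar>prob_out (run m r U x T) False - prob_out (run m r U y T) False\<bar>"
      by (rule trace_dist_first_qubit_ge[OF m])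
        (simp_all add: run_carrier_vec[OF qa order_refl] sq_norm_vec_run[OF qa order_refl])
    ultimately show ?thesis by linarith
  qed
  then show ?thesis
    unfolding separates_def using qa
    by (intro exI[of _ m] exI[of _ r] exI[of _ U] exI[of _ "{1..<m}"]) auto
qed

theorem proposition6:
  fixes n :: nat and D :: "bool list set" and f :: "bool list \<Rightarrow> bool"
  assumes "D \<subseteq> {x. length x = n}"
  shows "QS n D f \<le> Q n D f"
  unfolding QS_def Q_def
  by (rule INF_mono) (blast intro: computes_imp_separates)

end
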